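(* Let $w \in \mathbb{R}^n$ with $w_j > 0$ for all $j$, and let $x \in \mathbb{R}^n$ with $x_j > 0$ for $2 \le j \le n$. Define $c_x : [x_1^-, \infty) \to \mathbb{R}$, $c_x(t) = \|x - \phi_t(x)\|^2$. Then: (i) $c_x$ is piecewise $C^\infty$ with break points $b_j = \frac{w_1}{w_j} x_j$ ($2\le j\le n$), it is continuously differentiable at these break points, each smooth piece is strongly convex, and $c_x$ is strongly convex on $[x_1^-,\infty)$ and attains its minimum. (ii) Let $t^* = \arg\min_{t \in [x_1^-,\infty)} c_x(t)$. Then the Euclidean projection of $x$ onto $\Omega_1$ is \[ \arg\min_{z \in \Omega_1} \|x - z\| = \begin{cases} \phi_{x_1^+}(x) & \text{if } t^* < x_1^+,\\ \phi_{t^*}(x) & \text{if } t^* \in [x_1^+, 1],\\ \phi_1(x) & \text{if } t^* > 1.\end{cases} \]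
   Context: $\|\cdot\|$ is the Euclidean norm on $\mathbb{R}^n$. $\Omega_1 := \{ z \in \mathbb{R}^n_+ : z_1 \le 1,\ w_1 z_j \le w_j z_1 \text{ for } 2 \le j \le n\}$. For $t \in \mathbb{R}$, $\phi_t : \mathbb{R}^n \to \mathbb{R}^n$ is defined by $\phi_t(x)_1 = t$, and for $j \ne 1$: $\phi_t(x)_j = \frac{w_j}{w_1} t$ if $\frac{w_1}{w_j} x_j \ge t$, and $\phi_t(x)_j = x_j$ otherwise. $x_1^+ := \min\{1, \max\{0, x_1\}\}$ and $x_1^- := \min\{0, x_1\}$. *)

theory Defs
  imports "HOL-Analysis.Analysis"
begin

text \<open>Vectors in R^n are modelled as real^'n; the distinguished first coordinate
  is an arbitrary index i1 of the finite index type.\<close>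

definition Omega1 :: "'n::finite \<Rightarrow> real^'n \<Rightarrow> (real^'n) set" where
  "Omega1 i1 w = {z. (\<forall>j. z$j \<ge> 0) \<and> z$i1 \<le> 1 \<and>
                    (\<forall>j. j \<noteq> i1 \<longrightarrow> w$i1 * z$j \<le> w$j * z$i1)}"

definition phi :: "'n::finite \<Rightarrow> real^'n \<Rightarrow> real \<Rightarrow> real^'n \<Rightarrow> real^'n" where
  "phi i1 w t x = (\<chi> j. if j = i1 then t
                         else if (w$i1 / w$j) * x$j \<ge> t then (w$j / w$i1) * t
                         else x$j)"

definition x1plus :: "'n::finite \<Rightarrow> real^'n \<Rightarrow> real" where
  "x1plus i1 x = min 1 (max 0 (x$i1))"

definition x1minus :: "'n::finite \<Rightarrow> real^'n \<Rightarrow> real" where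
  "x1minus i1 x = min 0 (x$i1)"

text \<open>The cost function c_x(t) = norm (x - phi_t(x))^2 (written for all real t;
  only its restriction to [x1minus, infinity) is used).\<close>
definition cost :: "'n::finite \<Rightarrow> real^'n \<Rightarrow> real^'n \<Rightarrow> real \<Rightarrow> real" where
  "cost i1 w x t = (norm (x - phi i1 w t x))^2"

definition smooth_on :: "real set \<Rightarrow> (real \<Rightarrow> real) \<Rightarrow> bool" where
  "smooth_on S f \<longleftrightarrow> (\<forall>k. \<forall>t\<in>S. ((deriv ^^ k) f) differentiable (at t))"

definition strongly_convex_on :: "real set \<Rightarrow> (real \<Rightarrow> real) \<Rightarrow> bool" where
  "strongly_convex_on S f \<longleftrightarrow> (\<exists>\<mu>>0. \<forall>x\<in>S. \<forall>y\<in>S. \<forall>\<theta>\<in>{0..1}.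
      f (\<theta> * x + (1 - \<theta>) * y) \<le> \<theta> * f x + (1 - \<theta>) * f y - \<mu> / 2 * \<theta> * (1 - \<theta>) * (x - y)^2)"

definition breakpoints :: "'n::finite \<Rightarrow> real^'n \<Rightarrow> real^'n \<Rightarrow> real set" where
  "breakpoints i1 w x = {(w$i1 / w$j) * x$j | j. j \<noteq> i1}"

end

theory Submission
  imports Defs
begin

text \<open>For \<open>z \<in> \<Omega>\<^sub>1\<close> with first coordinate \<open>t\<close>, each coordinate of \<open>\<phi>\<^sub>t(x)\<close> is the
  projection of \<open>x\<^sub>j\<close> onto a half-line containing \<open>z\<^sub>j\<close>, so
  \<open>\<parallel>x - z\<parallel>\<^sup>2 \<ge> c\<^sub>x(t) + \<parallel>z - \<phi>\<^sub>t(x)\<parallel>\<^sup>2\<close>, while \<open>\<phi>\<^sub>t(x) \<in> \<Omega>\<^sub>1\<close> for \<open>t \<in> [0,1]\<close>: projecting onto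
  \<open>\<Omega>\<^sub>1\<close> amounts to minimising \<open>c\<^sub>x\<close> over \<open>[0,1]\<close>. Explicitly
  \<open>c\<^sub>x(t) = (x\<^sub>1 - t)\<^sup>2 + \<Sum>\<^sub>j (w\<^sub>j / w\<^sub>1)\<^sup>2 max(b\<^sub>j - t, 0)\<^sup>2\<close>, so \<open>c\<^sub>x - t\<^sup>2\<close> has a monotone
  derivative and \<open>c\<^sub>x\<close> is quadratic between break points. Hence \<open>c\<^sub>x\<close> is strongly convex and
  \<open>C\<^sup>1\<close>, and its minimiser over \<open>[0,1]\<close> is the unique global minimiser clamped to \<open>[0,1]\<close>.\<close>

lemma strongly_convex_onI:
  fixes f :: "real \<Rightarrow> real" and \<mu> :: real
  assumes conv: "convex_on S (\<lambda>t. f t - \<mu> / 2 * t\<^sup>2)" and "\<mu> > 0"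
  shows "strongly_convex_on S f"
  unfolding strongly_convex_on_def
proof (intro exI[of _ \<mu>] conjI ballI)
  fix x y \<theta> :: real assume "x \<in> S" "y \<in> S" "\<theta> \<in> {0..1}"
  define z where "z = \<theta> * x + (1 - \<theta>) * y"
  have "f z - \<mu> / 2 * z\<^sup>2 \<le> \<theta> * (f x - \<mu> / 2 * x\<^sup>2) + (1 - \<theta>) * (f y - \<mu> / 2 * y\<^sup>2)"
    using convex_onD[OF conv, of "1 - \<theta>" x y] \<open>x \<in> S\<close> \<open>y \<in> S\<close> \<open>\<theta> \<in> {0..1}\<close>
    by (simp add: z_def)
  moreover have "\<theta> * (f x - \<mu> / 2 * x\<^sup>2) + (1 - \<theta>) * (f y - \<mu> / 2 * y\<^sup>2)
      = \<theta> * f x + (1 - \<theta>) * f y - \<mu> / 2 * (\<theta> * x\<^sup>2 + (1 - \<theta>) * y\<^sup>2)"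
    by (simp add: field_simps)
  moreover have "\<mu> / 2 * (\<theta> * x\<^sup>2 + (1 - \<theta>) * y\<^sup>2)
      = \<mu> / 2 * z\<^sup>2 + \<mu> / 2 * \<theta> * (1 - \<theta>) * (x - y)\<^sup>2"
    by (simp add: z_def field_simps power2_eq_square)
  ultimately show "f (\<theta> * x + (1 - \<theta>) * y) \<le> \<theta> * f x + (1 - \<theta>) * f y - \<mu> / 2 * \<theta> * (1 - \<theta>) * (x - y)\<^sup>2"
    unfolding z_def by linarith
qed (fact \<open>\<mu> > 0\<close>)

lemma strongly_convex_on_minimizer_unique:
  fixes f :: "real \<Rightarrow> real"
  assumes "strongly_convex_on S f" "convex S"
    and "p \<in> S" "\<forall>s\<in>S. f p \<le> f s" "t \<in> S" "f t \<le> f p"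
  shows "t = p"
proof -
  obtain \<mu> where "\<mu> > 0" and sc: "\<forall>x\<in>S. \<forall>y\<in>S. \<forall>\<theta>\<in>{0..1}. f (\<theta> * x + (1 - \<theta>) * y)
      \<le> \<theta> * f x + (1 - \<theta>) * f y - \<mu> / 2 * \<theta> * (1 - \<theta>) * (x - y)\<^sup>2"
    using assms(1) unfolding strongly_convex_on_def by blast
  have "1/2 * t + (1 - 1/2) * p \<in> S"
    using convexD[OF \<open>convex S\<close> \<open>t \<in> S\<close> \<open>p \<in> S\<close>, of "1/2" "1/2"] by simp
  then have "f p \<le> f (1/2 * t + (1 - 1/2) * p)"
    using assms(4) by blast
  also have "\<dots> \<le> 1/2 * f t + (1 - 1/2) * f p - \<mu> / 2 * (1/2) * (1 - 1/2) * (t - p)\<^sup>2"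
    by (rule sc[rule_format]) (use \<open>t \<in> S\<close> \<open>p \<in> S\<close> in auto)
  finally have "\<mu> * (t - p)\<^sup>2 \<le> 0"
    using \<open>f t \<le> f p\<close> by simp
  then show ?thesis
    using \<open>\<mu> > 0\<close> by (simp add: mult_le_0_iff)
qed

lemma convex_on_clamp_le:
  fixes f :: "real \<Rightarrow> real"
  assumes "convex_on UNIV f" "\<forall>s\<in>{a..b}. f t \<le> f s" "s \<in> {a..b}"
  shows "f (max a (min b t)) \<le> f s"
proof -
  have between: "f p \<le> f s" if "p \<in> {u..v}" "f u \<le> f s" "f v \<le> f s" for p u v
    using convex_on_le_max[OF convex_on_subset[OF assms(1)], of u v p] that by simp
  consider "t < a" | "t \<in> {a..b}" | "b < t" by force
  then show ?thesis
  proof cases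
    case 1
    then show ?thesis using between[of a t s] assms(2,3) by auto
  next
    case 3
    then show ?thesis using between[of b s t] assms(2,3) by auto
  qed (use assms in auto)
qed

lemma coercive_attains_min_on_ray:
  fixes f :: "real \<Rightarrow> real"
  assumes "continuous_on {m..} f" "\<And>t. (a - t)\<^sup>2 \<le> f t"
  shows "\<exists>t\<ge>m. \<forall>s\<ge>m. f t \<le> f s"
proof -
  define M where "M = max m (a + sqrt (f m))"
  have "0 \<le> f m"
    using assms(2)[of m] zero_le_power2 order_trans by blast
  obtain t where t: "t \<in> {m..M}" and tmin: "\<forall>s\<in>{m..M}. f t \<le> f s"
    using continuous_attains_inf[of "{m..M}" f] continuous_on_subset[OF assms(1)]
    by (auto simp: M_def)
  have "f t \<le> f s" if "s \<ge> m" for s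
  proof (cases "s \<le> M")
    case False
    then have "sqrt (f m) \<le> s - a" by (simp add: M_def)
    then have "(sqrt (f m))\<^sup>2 \<le> (s - a)\<^sup>2"
      using \<open>0 \<le> f m\<close> by (intro power_mono) auto
    then have "f m \<le> (a - s)\<^sup>2"
      using \<open>0 \<le> f m\<close> by (simp add: power2_commute)
    then show ?thesis
      using assms(2)[of s] tmin[rule_format, of m] by (simp add: M_def)
  qed (use tmin that in auto)
  then show ?thesis
    using t by auto
qed

definition quadratic_on :: "real set \<Rightarrow> (real \<Rightarrow> real) \<Rightarrow> bool" where
  "quadratic_on S f \<longleftrightarrow> (\<exists>a b c. \<forall>s\<in>S. f s = a + b * s + c * s\<^sup>2)"

lemma quadratic_on_cong: "quadratic_on S f \<Longrightarrow> (\<And>s. s \<in> S \<Longrightarrow> g s = f s) \<Longrightarrow> quadratic_on S g"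
  unfolding quadratic_on_def by auto

lemma quadratic_on_const: "quadratic_on S (\<lambda>s. k)"
  unfolding quadratic_on_def by (intro exI[of _ k] exI[of _ 0]) simp

lemma quadratic_on_square_diff: "quadratic_on S (\<lambda>s. (b - s)\<^sup>2)"
  unfolding quadratic_on_def
  by (rule exI[of _ "b\<^sup>2"], rule exI[of _ "-2 * b"], rule exI[of _ 1])
     (simp add: algebra_simps power2_eq_square)

lemma quadratic_on_add:
  assumes "quadratic_on S f" "quadratic_on S g"
  shows "quadratic_on S (\<lambda>s. f s + g s)"
proof -
  obtain a b c a' b' c' where "\<forall>s\<in>S. f s = a + b * s + c * s\<^sup>2" "\<forall>s\<in>S. g s = a' + b' * s + c' * s\<^sup>2"
    using assms unfolding quadratic_on_def by blast
  then have "\<forall>s\<in>S. f s + g s = (a + a') + (b + b') * s + (c + c') * s\<^sup>2"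
    by (simp add: algebra_simps)
  then show ?thesis
    unfolding quadratic_on_def by blast
qed

lemma quadratic_on_cmult:
  assumes "quadratic_on S f"
  shows "quadratic_on S (\<lambda>s. k * f s)"
proof -
  obtain a b c where "\<forall>s\<in>S. f s = a + b * s + c * s\<^sup>2"
    using assms unfolding quadratic_on_def by blast
  then have "\<forall>s\<in>S. k * f s = k * a + (k * b) * s + (k * c) * s\<^sup>2"
    by (simp add: algebra_simps)
  then show ?thesis
    unfolding quadratic_on_def by blast
qed

lemma quadratic_on_sum:
  "finite A \<Longrightarrow> (\<And>j. j \<in> A \<Longrightarrow> quadratic_on S (f j)) \<Longrightarrow> quadratic_on S (\<lambda>s. \<Sum>j\<in>A. f j s)"
  by (induction A rule: finite_induct) (auto intro: quadratic_on_add quadratic_on_const)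

lemma quadratic_on_deriv:
  assumes "open S" "quadratic_on S f"
  shows "quadratic_on S (deriv f)" "\<forall>s\<in>S. f differentiable (at s)"
proof -
  obtain a b c where abc: "\<forall>s\<in>S. f s = a + b * s + c * s\<^sup>2"
    using assms(2) unfolding quadratic_on_def by blast
  have D: "(f has_real_derivative b + 2 * c * s) (at s)" if "s \<in> S" for s
  proof (rule has_field_derivative_transform_within_open[OF _ assms(1) that])
    show "((\<lambda>s. a + b * s + c * s\<^sup>2) has_real_derivative b + 2 * c * s) (at s)"
      by (auto intro!: derivative_eq_intros)
  qed (use abc in simp)
  then have "\<forall>s\<in>S. deriv f s = b + (2 * c) * s + 0 * s\<^sup>2"
    using DERIV_imp_deriv by fastforce
  then show "quadratic_on S (deriv f)"
    unfolding quadratic_on_def by blast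
  show "\<forall>s\<in>S. f differentiable (at s)"
    using D unfolding real_differentiable_def by blast
qed

lemma quadratic_on_imp_smooth_on:
  assumes "open S" "quadratic_on S f"
  shows "smooth_on S f"
proof -
  have "quadratic_on S ((deriv ^^ k) f)" for k
    by (induction k) (auto simp: assms quadratic_on_deriv(1))
  then show ?thesis
    unfolding smooth_on_def using quadratic_on_deriv(2)[OF assms(1)] by blast
qed

definition pos_sq :: "real \<Rightarrow> real" where
  "pos_sq u = (max u 0)\<^sup>2"

lemma pos_sq_has_derivative: "(pos_sq has_real_derivative 2 * max u 0) (at u)"
proof -
  have pos_sq_if: "pos_sq = (\<lambda>u. if u \<in> {..0} then 0 else u\<^sup>2)"
    by (auto simp: pos_sq_def fun_eq_iff max_def)
  have "((\<lambda>u. if u \<in> {..0} then 0 else u\<^sup>2) has_vector_derivative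
      (if u \<in> {..0} then 0 else 2 * u)) (at u within UNIV)"
  proof (rule has_vector_derivative_If_within_closures[where T = "{0<..}"])
    show "((\<lambda>u. u\<^sup>2) has_vector_derivative 2 * u) (at u within {0<..} \<union> (closure {..0} \<inter> closure {0<..}))"
      unfolding has_real_derivative_iff_has_vector_derivative[symmetric]
      by (rule has_field_derivative_at_within) (auto intro!: derivative_eq_intros)
  qed auto
  then show ?thesis
    unfolding pos_sq_if has_real_derivative_iff_has_vector_derivative
    by (auto simp: max_def)
qed

lemma quadratic_on_pos_sq_diff:
  assumes "is_interval S" "b \<notin> S"
  shows "quadratic_on S (\<lambda>s. pos_sq (b - s))"
proof -
  have "(\<forall>s\<in>S. s < b) \<or> (\<forall>s\<in>S. b < s)"
    using assms unfolding is_interval_1 by (metis linorder_not_less order_less_le)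
  then show ?thesis
  proof
    assume "\<forall>s\<in>S. s < b"
    then show ?thesis
      by (intro quadratic_on_cong[OF quadratic_on_square_diff]) (simp add: pos_sq_def)
  next
    assume "\<forall>s\<in>S. b < s"
    then show ?thesis
      by (intro quadratic_on_cong[OF quadratic_on_const[of _ 0]]) (simp add: pos_sq_def)
  qed
qed

definition breakpoint :: "'n::finite \<Rightarrow> real^'n \<Rightarrow> real^'n \<Rightarrow> 'n \<Rightarrow> real" where
  "breakpoint i1 w x j = (w$i1 / w$j) * x$j"

lemma breakpoints_eq_image: "breakpoints i1 w x = breakpoint i1 w x ` (UNIV - {i1})"
  unfolding breakpoints_def breakpoint_def by auto

lemma norm_vec_power2: "(norm (v :: real^'n))\<^sup>2 = (\<Sum>j\<in>UNIV. (v$j)\<^sup>2)"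
  by (simp add: norm_vec_def L2_set_def sum_nonneg)

lemma phi_component_diff_power2:
  assumes "\<forall>j. w$j > 0" "j \<noteq> i1"
  shows "(x$j - phi i1 w t x $ j)\<^sup>2 = (w$j / w$i1)\<^sup>2 * pos_sq (breakpoint i1 w x j - t)"
proof (cases "breakpoint i1 w x j \<ge> t")
  case True
  have "w$i1 > 0" "w$j > 0"
    using assms(1) by auto
  then have diff: "x$j - w$j / w$i1 * t = (w$j / w$i1) * (breakpoint i1 w x j - t)"
    by (simp add: breakpoint_def field_simps)
  have phi_j: "phi i1 w t x $ j = w$j / w$i1 * t"
    using True assms(2) by (simp add: phi_def breakpoint_def)
  have pos_sq_eq: "pos_sq (breakpoint i1 w x j - t) = (breakpoint i1 w x j - t)\<^sup>2"
    using True by (simp add: pos_sq_def)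
  show ?thesis
    by (simp only: phi_j diff pos_sq_eq power_mult_distrib)
next
  case False
  then show ?thesis
    using assms(2) unfolding phi_def pos_sq_def breakpoint_def by simp
qed

lemma cost_eq:
  assumes "\<forall>j. w$j > 0"
  shows "cost i1 w x t
    = (x$i1 - t)\<^sup>2 + (\<Sum>j\<in>UNIV - {i1}. (w$j / w$i1)\<^sup>2 * pos_sq (breakpoint i1 w x j - t))"
proof -
  have "cost i1 w x t = ((x - phi i1 w t x) $ i1)\<^sup>2 + (\<Sum>j\<in>UNIV - {i1}. ((x - phi i1 w t x) $ j)\<^sup>2)"
    unfolding cost_def norm_vec_power2 by (simp add: sum.remove)
  also have "\<dots> = (x$i1 - t)\<^sup>2 + (\<Sum>j\<in>UNIV - {i1}. (w$j / w$i1)\<^sup>2 * pos_sq (breakpoint i1 w x j - t))"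
    using phi_component_diff_power2[OF assms] by (simp add: phi_def)
  finally show ?thesis .
qed

lemma cost_has_derivative:
  assumes "\<forall>j. w$j > 0"
  shows "(cost i1 w x has_real_derivative
    2 * (t - x$i1) - (\<Sum>j\<in>UNIV - {i1}. (w$j / w$i1)\<^sup>2 * (2 * max (breakpoint i1 w x j - t) 0))) (at t)"
proof -
  have "((\<lambda>t. pos_sq (b - t)) has_real_derivative - (2 * max (b - t) 0)) (at t)" for b
  proof -
    have "((\<lambda>t. b - t) has_real_derivative -1) (at t)"
      by (auto intro!: derivative_eq_intros)
    from DERIV_chain2[OF pos_sq_has_derivative this] show ?thesis
      by simp
  qed
  then have "((\<lambda>t. (x$i1 - t)\<^sup>2 + (\<Sum>j\<in>UNIV - {i1}. (w$j / w$i1)\<^sup>2 * pos_sq (breakpoint i1 w x j - t)))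
      has_real_derivative 2 * (x$i1 - t) * (0 - 1)
        + (\<Sum>j\<in>UNIV - {i1}. (w$j / w$i1)\<^sup>2 * - (2 * max (breakpoint i1 w x j - t) 0))) (at t)"
    by (intro DERIV_add DERIV_sum DERIV_cmult) (auto intro!: derivative_eq_intros)
  then show ?thesis
    unfolding cost_eq[OF assms, abs_def] by (simp add: sum_negf algebra_simps)
qed

lemma deriv_cost:
  assumes "\<forall>j. w$j > 0"
  shows "deriv (cost i1 w x)
    = (\<lambda>t. 2 * (t - x$i1) - (\<Sum>j\<in>UNIV - {i1}. (w$j / w$i1)\<^sup>2 * (2 * max (breakpoint i1 w x j - t) 0)))"
  by (intro ext DERIV_imp_deriv cost_has_derivative[OF assms])

lemma continuous_on_cost: "\<forall>j. w$j > 0 \<Longrightarrow> continuous_on S (cost i1 w x)"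
  by (intro continuous_at_imp_continuous_on ballI DERIV_isCont[OF cost_has_derivative])

lemma convex_on_cost_minus_square:
  assumes "\<forall>j. w$j > 0"
  shows "convex_on UNIV (\<lambda>t. cost i1 w x t - t\<^sup>2)"
proof -
  define g where "g t = (\<Sum>j\<in>UNIV - {i1}. (w$j / w$i1)\<^sup>2 * (2 * max (breakpoint i1 w x j - t) 0))"
    for t
  have D: "((\<lambda>t. cost i1 w x t - t\<^sup>2) has_real_derivative 2 * (t - x$i1) - g t - 2 * t) (at t)" for t
  proof -
    have "((\<lambda>t. t\<^sup>2) has_real_derivative 2 * t) (at t)"
      by (auto intro!: derivative_eq_intros)
    from DERIV_diff[OF cost_has_derivative[OF assms] this] show ?thesis
      unfolding g_def .
  qed
  have mono: "2 * (s - x$i1) - g s - 2 * s \<le> 2 * (t - x$i1) - g t - 2 * t" if "s \<le> t" for s t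
  proof -
    have "g t \<le> g s"
      unfolding g_def using that by (intro sum_mono mult_left_mono) auto
    then show ?thesis
      by simp
  qed
  show ?thesis
    by (rule convex_on_realI[OF _ D mono]) simp_all
qed

lemma convex_on_cost: "\<forall>j. w$j > 0 \<Longrightarrow> convex_on UNIV (cost i1 w x)"
  using convex_on_add[OF convex_on_cost_minus_square convex_power2] by simp

lemma strongly_convex_on_cost:
  assumes "\<forall>j. w$j > 0" "convex S"
  shows "strongly_convex_on S (cost i1 w x)"
  by (rule strongly_convex_onI[where \<mu> = 2])
     (use convex_on_subset[OF convex_on_cost_minus_square[OF assms(1)] _ assms(2)] in simp_all)

lemma cost_ge_first_coord: "(x$i1 - t)\<^sup>2 \<le> cost i1 w x t"
proof -
  have "\<bar>x$i1 - t\<bar> \<le> norm (x - phi i1 w t x)"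
    using component_le_norm_cart[of "x - phi i1 w t x" i1] by (simp add: phi_def)
  then show ?thesis
    unfolding cost_def using abs_le_square_iff[of "x$i1 - t" "norm (x - phi i1 w t x)"] by simp
qed

lemma cost_exists_min_on_ray:
  "\<forall>j. w$j > 0 \<Longrightarrow> \<exists>t\<ge>m. \<forall>s\<ge>m. cost i1 w x t \<le> cost i1 w x s"
  by (rule coercive_attains_min_on_ray[OF continuous_on_cost cost_ge_first_coord])

lemma quadratic_on_cost:
  assumes "\<forall>j. w$j > 0" "is_interval S" "breakpoints i1 w x \<inter> S = {}"
  shows "quadratic_on S (cost i1 w x)"
proof -
  have "quadratic_on S (\<lambda>t. pos_sq (breakpoint i1 w x j - t))" if "j \<noteq> i1" for j
    using assms(2,3) that by (intro quadratic_on_pos_sq_diff) (auto simp: breakpoints_eq_image)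
  then show ?thesis
    unfolding cost_eq[OF assms(1), abs_def]
    by (intro quadratic_on_add quadratic_on_square_diff quadratic_on_sum quadratic_on_cmult) auto
qed

lemma smooth_on_cost:
  assumes "\<forall>j. w$j > 0" "open S" "is_interval S" "breakpoints i1 w x \<inter> S = {}"
  shows "smooth_on S (cost i1 w x)"
  using quadratic_on_imp_smooth_on[OF assms(2) quadratic_on_cost[OF assms(1,3,4)]] .

lemma Omega1_first_coord: "z \<in> Omega1 i1 w \<Longrightarrow> z$i1 \<in> {0..1}"
  by (auto simp: Omega1_def)

lemma phi_mem_Omega1:
  assumes wpos: "\<forall>j. w$j > 0" and xpos: "\<forall>j. j \<noteq> i1 \<longrightarrow> x$j > 0" and "p \<in> {0..1}"
  shows "phi i1 w p x \<in> Omega1 i1 w"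
  unfolding Omega1_def
proof (intro CollectI conjI allI impI)
  fix j
  have "w$i1 > 0" "w$j > 0"
    using wpos by auto
  then show "phi i1 w p x $ j \<ge> 0"
    using \<open>p \<in> {0..1}\<close> xpos by (auto simp: phi_def)
  assume "j \<noteq> i1"
  show "w$i1 * phi i1 w p x $ j \<le> w$j * phi i1 w p x $ i1"
  proof (cases "(w$i1 / w$j) * x$j \<ge> p")
    case True
    then show ?thesis
      using \<open>j \<noteq> i1\<close> \<open>w$i1 > 0\<close> by (simp add: phi_def)
  next
    case False
    then have "w$i1 * x$j < w$j * p"
      using \<open>w$j > 0\<close> by (simp add: field_simps)
    then show ?thesis
      using \<open>j \<noteq> i1\<close> False by (simp add: phi_def)
  qed
qed (use \<open>p \<in> {0..1}\<close> in \<open>auto simp: phi_def\<close>)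

lemma cost_le_norm_diff_Omega1:
  assumes wpos: "\<forall>j. w$j > 0" and z: "z \<in> Omega1 i1 w"
  shows "cost i1 w x (z$i1) + (norm (z - phi i1 w (z$i1) x))\<^sup>2 \<le> (norm (x - z))\<^sup>2"
proof -
  define t where "t = z$i1"
  have "(x$j - phi i1 w t x $ j)\<^sup>2 + (z$j - phi i1 w t x $ j)\<^sup>2 \<le> (x$j - z$j)\<^sup>2" for j
  proof (cases "j \<noteq> i1 \<and> (w$i1 / w$j) * x$j \<ge> t")
    case True
    define c where "c = (w$j / w$i1) * t"
    have "w$i1 > 0" "w$j > 0"
      using wpos by auto
    moreover have "w$i1 * z$j \<le> w$j * t"
      using z True unfolding Omega1_def t_def by auto
    ultimately have "z$j \<le> c" "c \<le> x$j"
      using True by (simp_all add: c_def field_simps)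
    then have "0 \<le> (x$j - c) * (c - z$j)"
      by simp
    moreover have "(x$j - z$j)\<^sup>2 = (x$j - c)\<^sup>2 + (z$j - c)\<^sup>2 + 2 * ((x$j - c) * (c - z$j))"
      by (simp add: power2_eq_square algebra_simps)
    moreover have "phi i1 w t x $ j = c"
      using True by (simp add: phi_def c_def)
    ultimately show ?thesis
      by (simp add: power2_commute)
  next
    case False
    then show ?thesis
      by (auto simp: phi_def t_def power2_commute)
  qed
  then have "(\<Sum>j\<in>UNIV. ((x - phi i1 w t x) $ j)\<^sup>2 + ((z - phi i1 w t x) $ j)\<^sup>2) \<le> (\<Sum>j\<in>UNIV. ((x - z) $ j)\<^sup>2)"
    by (intro sum_mono) simp
  then show ?thesis
    unfolding cost_def norm_vec_power2 t_def[symmetric] by (simp add: sum.distrib)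
qed

lemma nearest_Omega1_eq_phi:
  assumes wpos: "\<forall>j. w$j > 0" and xpos: "\<forall>j. j \<noteq> i1 \<longrightarrow> x$j > 0"
    and p: "p \<in> {0..1}" and pmin: "\<forall>s\<in>{0..1}. cost i1 w x p \<le> cost i1 w x s"
  shows "{z \<in> Omega1 i1 w. \<forall>z'\<in>Omega1 i1 w. norm (x - z) \<le> norm (x - z')} = {phi i1 w p x}"
proof -
  let ?P = "phi i1 w p x"
  have P: "?P \<in> Omega1 i1 w"
    by (rule phi_mem_Omega1[OF wpos xpos p])
  have cost_le: "cost i1 w x p + (norm (z - phi i1 w (z$i1) x))\<^sup>2 \<le> (norm (x - z))\<^sup>2"
    if "z \<in> Omega1 i1 w" for z
  proof -
    have "cost i1 w x p \<le> cost i1 w x (z$i1)"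
      using pmin Omega1_first_coord[OF that] by blast
    then show ?thesis
      using cost_le_norm_diff_Omega1[OF wpos that, where x = x] by linarith
  qed
  have P_nearest: "norm (x - ?P) \<le> norm (x - z)" if "z \<in> Omega1 i1 w" for z
  proof (rule power2_le_imp_le)
    show "(norm (x - ?P))\<^sup>2 \<le> (norm (x - z))\<^sup>2"
      using cost_le[OF that] unfolding cost_def by (smt (verit) zero_le_power2)
  qed simp
  have P_unique: "z = ?P" if "z \<in> Omega1 i1 w" "norm (x - z) \<le> norm (x - ?P)" for z
  proof -
    have "(norm (x - z))\<^sup>2 \<le> cost i1 w x p"
      using that(2) unfolding cost_def by (intro power_mono) simp_all
    moreover have "cost i1 w x p \<le> cost i1 w x (z$i1)"
      using pmin Omega1_first_coord[OF that(1)] by blast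
    ultimately have "(norm (z - phi i1 w (z$i1) x))\<^sup>2 \<le> 0" "cost i1 w x (z$i1) \<le> cost i1 w x p"
      using cost_le_norm_diff_Omega1[OF wpos that(1), where x = x]
        zero_le_power2[of "norm (z - phi i1 w (z$i1) x)"] by linarith+
    then have "z = phi i1 w (z$i1) x" "cost i1 w x (z$i1) \<le> cost i1 w x p"
      by simp_all
    moreover have "z$i1 = p"
      using strongly_convex_on_minimizer_unique[OF strongly_convex_on_cost[OF wpos] _ p pmin]
        Omega1_first_coord[OF that(1)] calculation(2) by simp
    ultimately show ?thesis
      by simp
  qed
  show ?thesis
  proof (intro equalityI subsetI)
    fix z assume "z \<in> {z \<in> Omega1 i1 w. \<forall>z'\<in>Omega1 i1 w. norm (x - z) \<le> norm (x - z')}"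
    then show "z \<in> {?P}"
      using P P_unique by simp
  qed (use P P_nearest in simp)
qed

lemma first_coord_le_cost_minimizer:
  assumes wpos: "\<forall>j. w$j > 0"
    and ts: "ts \<ge> x1minus i1 x" "\<forall>s\<ge>x1minus i1 x. cost i1 w x ts \<le> cost i1 w x s"
  shows "x$i1 \<le> ts"
proof (rule ccontr)
  assume "\<not> x$i1 \<le> ts"
  have "cost i1 w x (x$i1) < cost i1 w x ts"
  proof (rule DERIV_neg_imp_decreasing_open[where f = "cost i1 w x"])
    show "ts < x$i1"
      using \<open>\<not> x$i1 \<le> ts\<close> by simp
    fix t assume "t < x$i1"
    moreover have "0 \<le> (\<Sum>j\<in>UNIV - {i1}. (w$j / w$i1)\<^sup>2 * (2 * max (breakpoint i1 w x j - t) 0))"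
      by (intro sum_nonneg) simp
    ultimately show "\<exists>y. (cost i1 w x has_real_derivative y) (at t) \<and> y < 0"
      using cost_has_derivative[OF wpos] by fastforce
  qed (rule continuous_on_cost[OF wpos])
  moreover have "x1minus i1 x \<le> x$i1"
    by (simp add: x1minus_def)
  ultimately show False
    using ts(2) by (meson not_le)
qed

lemma nearest_Omega1:
  assumes wpos: "\<forall>j. w$j > 0" and xpos: "\<forall>j. j \<noteq> i1 \<longrightarrow> x$j > 0"
    and ts: "ts \<ge> x1minus i1 x" "\<forall>s\<ge>x1minus i1 x. cost i1 w x ts \<le> cost i1 w x s"
  shows "{z \<in> Omega1 i1 w. \<forall>z'\<in>Omega1 i1 w. norm (x - z) \<le> norm (x - z')} =
          {if ts < x1plus i1 x then phi i1 w (x1plus i1 x) x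
           else if ts \<le> 1 then phi i1 w ts x
           else phi i1 w 1 x}"
proof -
  define p where "p = max 0 (min 1 ts)"
  have "x$i1 \<le> ts"
    by (rule first_coord_le_cost_minimizer[OF wpos ts])
  \<comment> \<open>so \<open>ts < x1plus i1 x\<close> forces \<open>x1plus i1 x = 0\<close>: the three cases clamp \<open>ts\<close> to \<open>[0,1]\<close>\<close>
  then have "(if ts < x1plus i1 x then phi i1 w (x1plus i1 x) x
           else if ts \<le> 1 then phi i1 w ts x else phi i1 w 1 x) = phi i1 w p x"
    by (auto simp: p_def x1plus_def)
  moreover have "\<forall>s\<in>{0..1}. cost i1 w x p \<le> cost i1 w x s"
  proof -
    have "\<forall>s\<in>{0..1}. cost i1 w x ts \<le> cost i1 w x s"
      using ts(2) by (auto simp: x1minus_def)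
    then show ?thesis
      unfolding p_def using convex_on_clamp_le[OF convex_on_cost[OF wpos]] by blast
  qed
  ultimately show ?thesis
    using nearest_Omega1_eq_phi[OF wpos xpos] by (simp add: p_def)
qed

theorem mainTheorem4:
  fixes w x :: "real^'n" and i1 :: 'n
  assumes wpos: "\<forall>j. w$j > 0"
    and xpos: "\<forall>j. j \<noteq> i1 \<longrightarrow> x$j > 0"
  shows
   "(\<forall>I. is_interval I \<longrightarrow> I \<subseteq> {x1minus i1 x..} \<longrightarrow>
          breakpoints i1 w x \<inter> interior I = {} \<longrightarrow>
          smooth_on (interior I) (cost i1 w x) \<and> strongly_convex_on I (cost i1 w x))
    \<and> (\<forall>b\<in>breakpoints i1 w x. (\<exists>\<epsilon>>0. \<forall>t\<in>ball b \<epsilon>. cost i1 w x differentiable (at t))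
                                  \<and> isCont (deriv (cost i1 w x)) b)
    \<and> strongly_convex_on {x1minus i1 x..} (cost i1 w x)
    \<and> (\<exists>t\<ge>x1minus i1 x. \<forall>s\<ge>x1minus i1 x. cost i1 w x t \<le> cost i1 w x s)
    \<and> (\<forall>ts. ts \<ge> x1minus i1 x \<and> (\<forall>s\<ge>x1minus i1 x. cost i1 w x ts \<le> cost i1 w x s) \<longrightarrow>
          {z \<in> Omega1 i1 w. \<forall>z'\<in>Omega1 i1 w. norm (x - z) \<le> norm (x - z')} =
          {if ts < x1plus i1 x then phi i1 w (x1plus i1 x) x
           else if ts \<le> 1 then phi i1 w ts x
           else phi i1 w 1 x})"
proof (intro conjI allI impI ballI)
  fix I :: "real set" assume I: "is_interval I" "breakpoints i1 w x \<inter> interior I = {}"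
  then have "is_interval (interior I)"
    by (simp add: is_interval_convex_1)
  then show "smooth_on (interior I) (cost i1 w x)"
    using smooth_on_cost[OF wpos open_interior _ I(2)] by blast
  show "strongly_convex_on I (cost i1 w x)"
    using strongly_convex_on_cost[OF wpos] I(1) by (simp add: is_interval_convex_1)
next
  fix b :: real
  have "cost i1 w x differentiable (at t)" for t
    using cost_has_derivative[OF wpos] unfolding real_differentiable_def by blast
  then show "\<exists>\<epsilon>>0. \<forall>t\<in>ball b \<epsilon>. cost i1 w x differentiable (at t)"
    using zero_less_one by blast
  show "isCont (deriv (cost i1 w x)) b"
    unfolding deriv_cost[OF wpos] by (intro continuous_intros)
next
  show "strongly_convex_on {x1minus i1 x..} (cost i1 w x)"
    by (rule strongly_convex_on_cost[OF wpos convex_real_interval(1)])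
  show "\<exists>t\<ge>x1minus i1 x. \<forall>s\<ge>x1minus i1 x. cost i1 w x t \<le> cost i1 w x s"
    by (rule cost_exists_min_on_ray[OF wpos])
next
  fix ts assume "ts \<ge> x1minus i1 x \<and> (\<forall>s\<ge>x1minus i1 x. cost i1 w x ts \<le> cost i1 w x s)"
  then show "{z \<in> Omega1 i1 w. \<forall>z'\<in>Omega1 i1 w. norm (x - z) \<le> norm (x - z')} =
          {if ts < x1plus i1 x then phi i1 w (x1plus i1 x) x
           else if ts \<le> 1 then phi i1 w ts x
           else phi i1 w 1 x}"
    using nearest_Omega1[OF wpos xpos] by blast
qed

end
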